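(* Let $\Gamma$ be a finite group and let $\pi$ be a faithful irreducible unitary representation of $\Gamma$ on a finite-dimensional Hilbert space $\mathsf{H}$. Then there exists $\xi\in\mathsf{H}$ such that the matrix coefficient $g\mapsto\langle\xi,\pi(g)\xi\rangle$ separates the points of $\Gamma$. *)

theory Defs
  imports "HOL-Algebra.Group" "Jordan_Normal_Form.Schur_Decomposition"
begin

text \<open>The finite-dimensional complex Hilbert space H is modelled as C^n (vectors of
  dimension n), with inner product given by the library's conjugate scalar product.\<close>

definition unitary_mat :: "nat \<Rightarrow> complex mat \<Rightarrow> bool" where
  "unitary_mat n U \<longleftrightarrow> U \<in> carrier_mat n n \<and>
     mat_adjoint U * U = 1\<^sub>m n \<and> U * mat_adjoint U = 1\<^sub>m n"

definition unitary_rep :: "('g, 'b) monoid_scheme \<Rightarrow> nat \<Rightarrow> ('g \<Rightarrow> complex mat) \<Rightarrow> bool" where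
  "unitary_rep G n \<pi> \<longleftrightarrow>
     (\<forall>g\<in>carrier G. unitary_mat n (\<pi> g)) \<and>
     (\<forall>g\<in>carrier G. \<forall>h\<in>carrier G. \<pi> (g \<otimes>\<^bsub>G\<^esub> h) = \<pi> g * \<pi> h)"

definition invariant_subspace :: "('g, 'b) monoid_scheme \<Rightarrow> nat \<Rightarrow> ('g \<Rightarrow> complex mat) \<Rightarrow> complex vec set \<Rightarrow> bool" where
  "invariant_subspace G n \<pi> W \<longleftrightarrow>
     W \<subseteq> carrier_vec n \<and> 0\<^sub>v n \<in> W \<and>
     (\<forall>v\<in>W. \<forall>w\<in>W. v + w \<in> W) \<and>
     (\<forall>c::complex. \<forall>w\<in>W. c \<cdot>\<^sub>v w \<in> W) \<and>
     (\<forall>g\<in>carrier G. \<forall>w\<in>W. \<pi> g *\<^sub>v w \<in> W)"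

definition irreducible_rep :: "('g, 'b) monoid_scheme \<Rightarrow> nat \<Rightarrow> ('g \<Rightarrow> complex mat) \<Rightarrow> bool" where
  "irreducible_rep G n \<pi> \<longleftrightarrow> n > 0 \<and>
     (\<forall>W. invariant_subspace G n \<pi> W \<longrightarrow> W = {0\<^sub>v n} \<or> W = carrier_vec n)"

definition faithful_rep :: "('g, 'b) monoid_scheme \<Rightarrow> ('g \<Rightarrow> complex mat) \<Rightarrow> bool" where
  "faithful_rep G \<pi> \<longleftrightarrow> inj_on \<pi> (carrier G)"

end

theory Submission imports Defs begin

text \<open>The matrix coefficients of g and h agree at \<xi> exactly when the quadratic form
  of \<pi> g - \<pi> h vanishes at \<xi>. By polarization the quadratic form of a nonzero matrix
  is not identically zero, and a common non-zero of finitely many such forms is found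
  by induction: given one for all forms but one, and a non-zero y of the last form,
  each form restricted to the real line x + t y is a nonzero quadratic polynomial in t,
  so all but finitely many t work. Hence only finiteness and faithfulness are needed.\<close>

lemma minus_mat_eq_zero_iff:
  fixes A B :: "'a :: ab_group_add mat"
  assumes "A \<in> carrier_mat nr nc" "B \<in> carrier_mat nr nc"
  shows "A - B = 0\<^sub>m nr nc \<longleftrightarrow> A = B"
proof
  assume diff: "A - B = 0\<^sub>m nr nc"
  show "A = B"
  proof (rule eq_matI)
    fix i j assume "i < dim_row B" "j < dim_col B"
    then have "(A - B) $$ (i, j) = A $$ (i, j) - B $$ (i, j)" "0\<^sub>m nr nc $$ (i, j) = (0 :: 'a)"
      using assms by auto
    with diff show "A $$ (i, j) = B $$ (i, j)" by simp
  qed (use assms in auto)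
qed (use assms in simp)

definition sesq_form :: "complex mat \<Rightarrow> complex vec \<Rightarrow> complex vec \<Rightarrow> complex" where
  "sesq_form A v w = v \<bullet>c (A *\<^sub>v w)"

lemma sesq_form_add_left:
  "A \<in> carrier_mat n n \<Longrightarrow> u \<in> carrier_vec n \<Longrightarrow> v \<in> carrier_vec n \<Longrightarrow> w \<in> carrier_vec n \<Longrightarrow>
    sesq_form A (u + v) w = sesq_form A u w + sesq_form A v w"
  unfolding sesq_form_def by (rule add_scalar_prod_distrib) auto

lemma sesq_form_add_right:
  "A \<in> carrier_mat n n \<Longrightarrow> u \<in> carrier_vec n \<Longrightarrow> v \<in> carrier_vec n \<Longrightarrow> w \<in> carrier_vec n \<Longrightarrow>
    sesq_form A u (v + w) = sesq_form A u v + sesq_form A u w"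
  unfolding sesq_form_def
  by (simp add: mult_add_distrib_mat_vec[of A n n] conjugate_add_vec[of _ n]
      scalar_prod_add_distrib[of _ n])

lemma sesq_form_smult_left:
  "A \<in> carrier_mat n n \<Longrightarrow> u \<in> carrier_vec n \<Longrightarrow> w \<in> carrier_vec n \<Longrightarrow>
    sesq_form A (c \<cdot>\<^sub>v u) w = c * sesq_form A u w"
  unfolding sesq_form_def by (rule smult_scalar_prod_distrib) auto

lemma sesq_form_smult_right:
  "A \<in> carrier_mat n n \<Longrightarrow> u \<in> carrier_vec n \<Longrightarrow> w \<in> carrier_vec n \<Longrightarrow>
    sesq_form A u (c \<cdot>\<^sub>v w) = cnj c * sesq_form A u w"
  unfolding sesq_form_def
  by (simp add: mult_mat_vec[of A n n] conjugate_smult_vec scalar_prod_smult_distrib[of _ n])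

lemma sesq_form_minus_mat:
  assumes "A \<in> carrier_mat n n" "B \<in> carrier_mat n n" "u \<in> carrier_vec n" "w \<in> carrier_vec n"
  shows "sesq_form (A - B) u w = sesq_form A u w - sesq_form B u w"
proof -
  have "conjugate (A *\<^sub>v w - B *\<^sub>v w) = conjugate (A *\<^sub>v w) - conjugate (B *\<^sub>v w)"
    using assms by (intro eq_vecI) auto
  with assms show ?thesis
    unfolding sesq_form_def
    by (simp add: minus_mult_distrib_mat_vec[of A n n] scalar_prod_minus_distrib[of _ n])
qed

lemma sesq_form_unit_vec:
  "A \<in> carrier_mat n n \<Longrightarrow> i < n \<Longrightarrow> j < n \<Longrightarrow>
    sesq_form A (unit_vec n i) (unit_vec n j) = cnj (A $$ (i, j))"
  unfolding sesq_form_def by (subst scalar_prod_left_unit[of _ n]) auto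

lemma sesq_form_diag_add_smult:
  assumes "A \<in> carrier_mat n n" "x \<in> carrier_vec n" "y \<in> carrier_vec n"
  shows "sesq_form A (x + t \<cdot>\<^sub>v y) (x + t \<cdot>\<^sub>v y) =
    sesq_form A x x + cnj t * sesq_form A x y + t * sesq_form A y x + t * cnj t * sesq_form A y y"
  using assms
  by (simp add: sesq_form_add_left[of A n] sesq_form_add_right[of A n]
      sesq_form_smult_left[of A n] sesq_form_smult_right[of A n] algebra_simps)

lemma zero_mat_if_sesq_form_diag_vanishes:
  assumes A: "A \<in> carrier_mat n n" and diag: "\<And>x. x \<in> carrier_vec n \<Longrightarrow> sesq_form A x x = 0"
  shows "A = 0\<^sub>m n n"
proof (rule eq_matI)
  fix i j assume "i < dim_row (0\<^sub>m n n :: complex mat)" "j < dim_col (0\<^sub>m n n :: complex mat)"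
  then have i: "i < n" and j: "j < n" by auto
  define u :: "complex vec" where "u = unit_vec n i"
  define w :: "complex vec" where "w = unit_vec n j"
  have u: "u \<in> carrier_vec n" and w: "w \<in> carrier_vec n"
    unfolding u_def w_def by auto
  have "sesq_form A (u + t \<cdot>\<^sub>v w) (u + t \<cdot>\<^sub>v w) = cnj t * sesq_form A u w + t * sesq_form A w u"
    for t
    using sesq_form_diag_add_smult[OF A u w, of t] diag u w by simp
  \<comment> \<open>polarization with t = 1 and t = \<i>\<close>
  from this[of 1] this[of \<i>] have "sesq_form A u w + sesq_form A w u = 0"
      and "- \<i> * sesq_form A u w + \<i> * sesq_form A w u = 0"
    using diag[of "u + 1 \<cdot>\<^sub>v w"] diag[of "u + \<i> \<cdot>\<^sub>v w"] u w by simp_all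
  then have "sesq_form A u w = 0"
    by (simp add: algebra_simps eq_neg_iff_add_eq_0[symmetric])
  then show "A $$ (i, j) = 0\<^sub>m n n $$ (i, j)"
    using sesq_form_unit_vec[OF A i j] i j unfolding u_def w_def by simp
qed (use A in auto)

lemma finite_real_roots_complex_poly:
  "p \<noteq> 0 \<Longrightarrow> finite {t :: real. poly p (complex_of_real t) = 0}"
  using finite_vimageI[OF poly_roots_finite inj_of_real] by (simp add: vimage_def)

lemma ex_vec_sesq_form_diag_nonzero:
  assumes "finite M" "M \<subseteq> carrier_mat n n" "0\<^sub>m n n \<notin> M"
  shows "\<exists>x\<in>carrier_vec n. \<forall>A\<in>M. sesq_form A x x \<noteq> 0"
  using assms
proof (induction M rule: finite_induct)
  case empty
  show ?case by (intro bexI[of _ "0\<^sub>v n"]) auto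
next
  case (insert B M)
  then obtain x where x: "x \<in> carrier_vec n" and x_M: "\<forall>A\<in>M. sesq_form A x x \<noteq> 0"
    by auto
  obtain y where y: "y \<in> carrier_vec n" and y_B: "sesq_form B y y \<noteq> 0"
    using zero_mat_if_sesq_form_diag_vanishes[of B n] insert.prems by auto
  define p where "p A = [:sesq_form A x x, sesq_form A x y + sesq_form A y x, sesq_form A y y:]"
    for A
  have line: "sesq_form A (x + of_real t \<cdot>\<^sub>v y) (x + of_real t \<cdot>\<^sub>v y) = poly (p A) (of_real t)"
    if "A \<in> carrier_mat n n" for A t
    using sesq_form_diag_add_smult[OF that x y, of "of_real t"]
    by (simp add: p_def algebra_simps)
  have "finite (\<Union>A\<in>insert B M. {t :: real. poly (p A) (of_real t) = 0})"
  proof (intro finite_UN_I finite_real_roots_complex_poly)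
    show "finite (insert B M)" using insert.hyps by simp
    show "p A \<noteq> 0" if "A \<in> insert B M" for A
      using that x_M y_B by (auto simp: p_def)
  qed
  then obtain t :: real where t: "\<forall>A\<in>insert B M. poly (p A) (of_real t) \<noteq> 0"
    using ex_new_if_finite[OF infinite_UNIV_char_0] by blast
  show ?case
    using x y t line insert.prems(1) by (intro bexI[of _ "x + of_real t \<cdot>\<^sub>v y"]) auto
qed

lemma ex_vec_quadratic_form_inj_on:
  fixes S :: "complex mat set"
  assumes "finite S" "S \<subseteq> carrier_mat n n"
  shows "\<exists>x\<in>carrier_vec n. inj_on (\<lambda>A. x \<bullet>c (A *\<^sub>v x)) S"
proof -
  define M where "M = (\<lambda>(A, B). A - B) ` {(A, B) \<in> S \<times> S. A \<noteq> B}"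
  have "finite {(A, B) \<in> S \<times> S. A \<noteq> B}"
    by (rule finite_subset[of _ "S \<times> S"]) (use assms(1) in auto)
  then have "finite M"
    unfolding M_def by (rule finite_imageI)
  moreover have "M \<subseteq> carrier_mat n n"
    unfolding M_def using assms(2) by (auto intro: minus_carrier_mat)
  moreover have "0\<^sub>m n n \<notin> M"
  proof
    assume "0\<^sub>m n n \<in> M"
    then obtain A B where "A \<in> S" "B \<in> S" "A \<noteq> B" "A - B = 0\<^sub>m n n"
      unfolding M_def by auto
    then show False
      using assms(2) minus_mat_eq_zero_iff[of A n n B] by auto
  qed
  ultimately obtain x where x: "x \<in> carrier_vec n" and x_M: "\<forall>A\<in>M. sesq_form A x x \<noteq> 0"
    using ex_vec_sesq_form_diag_nonzero by blast
  have "inj_on (\<lambda>A. sesq_form A x x) S"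
  proof (rule inj_onI, rule ccontr)
    fix A B assume A: "A \<in> S" and B: "B \<in> S" and "A \<noteq> B"
      and eq: "sesq_form A x x = sesq_form B x x"
    then have "A - B \<in> M"
      unfolding M_def by auto
    moreover have "sesq_form (A - B) x x = 0"
      using sesq_form_minus_mat[of A n B x x] A B x assms(2) eq by auto
    ultimately show False
      using x_M by blast
  qed
  with x show ?thesis unfolding sesq_form_def by blast
qed

theorem proposition6p1:
  fixes G :: "('g, 'b) monoid_scheme" and n :: nat and \<pi> :: "'g \<Rightarrow> complex mat"
  assumes "group G" and "finite (carrier G)"
    and "unitary_rep G n \<pi>" and "faithful_rep G \<pi>" and "irreducible_rep G n \<pi>"
  shows "\<exists>\<xi>\<in>carrier_vec n. inj_on (\<lambda>g. \<xi> \<bullet>c (\<pi> g *\<^sub>v \<xi>)) (carrier G)"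
proof -
  have "\<pi> ` carrier G \<subseteq> carrier_mat n n"
    using assms(3) unfolding unitary_rep_def unitary_mat_def by auto
  then obtain \<xi> where "\<xi> \<in> carrier_vec n" "inj_on (\<lambda>A. \<xi> \<bullet>c (A *\<^sub>v \<xi>)) (\<pi> ` carrier G)"
    using ex_vec_quadratic_form_inj_on assms(2) by blast
  moreover have "inj_on \<pi> (carrier G)"
    using assms(4) unfolding faithful_rep_def .
  ultimately show ?thesis
    using comp_inj_on[of \<pi> "carrier G" "\<lambda>A. \<xi> \<bullet>c (A *\<^sub>v \<xi>)"] by (auto simp: o_def)
qed

end
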